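(* Let $Y=X\beta+\epsilon$ with $Y\in\mathbb{R}^n$ and $X$ an $n\times d$ matrix. Let $B=\bigcup_{j=1}^J B_j\subset\mathbb{R}^d$ be a finite disjoint union, where each $B_j$ is a manifold, possibly with boundary or corner, and let $p:B\to\mathbb{R}$ be a (deterministic) penalty that is continuous on each $B_j$. Let $Q(\beta,Y,X)=\tfrac12\|Y-X\beta\|^2+p(\beta)$. If $X$ has full rank $d$ and the distribution of $Y$ conditional on $X$ is absolutely continuous, then the argmin of $Q(\beta,Y,X)$ over $\beta\in B$ is unique almost surely.
   Context: A manifold with boundary or corner of dimension $m$ is a (second-countable Hausdorff) space in which every point has a neighborhood diffeomorphic, via a continuously differentiable map with continuously differentiable inverse, to a relatively open subset of $[0,\infty)^m$. "Unique" means the argmin contains at most one point. *)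

theory Defs
  imports "HOL-Probability.Probability"
begin

definition C1_on :: "('a::real_normed_vector) set \<Rightarrow> ('a \<Rightarrow> 'b::real_normed_vector) \<Rightarrow> bool" where
  "C1_on S f \<longleftrightarrow>
     (\<forall>x\<in>S. \<exists>W g g'. open W \<and> x \<in> W \<and> (\<forall>y\<in>S \<inter> W. g y = f y) \<and>
        (\<forall>y\<in>W. (g has_derivative blinfun_apply (g' y)) (at y)) \<and> continuous_on W g')"

definition C1_diffeo :: "('a::real_normed_vector) set \<Rightarrow> ('b::real_normed_vector) set \<Rightarrow> ('a \<Rightarrow> 'b) \<Rightarrow> bool" where
  "C1_diffeo S T f \<longleftrightarrow> bij_betw f S T \<and> C1_on S f \<and> C1_on T (inv_into S f)"

text \<open>Model corner [0,\<infinity>)^m, m = card K, realised inside real^'d on the coordinates K.\<close>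
definition orthant :: "'d::finite set \<Rightarrow> (real^'d) set" where
  "orthant K = {x. \<forall>i. 0 \<le> x $ i \<and> (i \<notin> K \<longrightarrow> x $ i = 0)}"

definition manifold_with_corners :: "(real^'d::finite) set \<Rightarrow> bool" where
  "manifold_with_corners S \<longleftrightarrow>
     (\<exists>K::'d set. \<forall>x\<in>S. \<exists>U V \<phi>. openin (top_of_set S) U \<and> x \<in> U \<and>
         openin (top_of_set (orthant K)) V \<and> C1_diffeo U V \<phi>)"

definition Qobj :: "real^'d^'n \<Rightarrow> (real^'d \<Rightarrow> real) \<Rightarrow> real^'n \<Rightarrow> real^'d \<Rightarrow> real" where
  "Qobj X p y \<beta> = (1/2) * (norm (y - X *v \<beta>))^2 + p \<beta>"

definition argmin_set :: "(real^'d \<Rightarrow> real) \<Rightarrow> (real^'d) set \<Rightarrow> (real^'d) set" where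
  "argmin_set f B = {\<beta>\<in>B. \<forall>\<gamma>\<in>B. f \<beta> \<le> f \<gamma>}"

end

theory Submission
  imports Defs
begin

text \<open>By the two minimality inequalities, the multimap sending y to the fitted
  values X\<beta> of its minimisers is monotone, (u - u') \<bullet> (y - y') \<ge> 0. A monotone multimap is
  single-valued off a Lebesgue null set: the points y at which it takes two values whose
  i-th coordinates are separated by a fixed gap form a set on which y $ i is a Lipschitz
  function of the other coordinates, i.e. a subset of a Lipschitz graph over a hyperplane,
  and countably many such gap sets exhaust all points of non-uniqueness. Full rank makes
  \<beta> \<mapsto> X\<beta> injective, and absolute continuity transfers the null set to the law of Y.\<close>

definition hyperplane_proj :: "'n::finite \<Rightarrow> real^'n \<Rightarrow> real^'n" where
  "hyperplane_proj i y = y - (y $ i) *\<^sub>R axis i 1"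

lemma hyperplane_proj_decomp: "y = hyperplane_proj i y + (y $ i) *\<^sub>R axis i 1"
  by (simp add: hyperplane_proj_def)

lemma diff_hyperplane_proj_decomp:
  "y - y' = (hyperplane_proj i y - hyperplane_proj i y') + (y $ i - y' $ i) *\<^sub>R axis i 1"
  by (simp add: hyperplane_proj_def algebra_simps)

lemma negligible_coordinate_Lipschitz_graph:
  fixes A :: "(real^'n::finite) set"
  assumes lip: "\<And>y y'. y \<in> A \<Longrightarrow> y' \<in> A \<Longrightarrow>
                  \<bar>y $ i - y' $ i\<bar> \<le> c * norm (hyperplane_proj i y - hyperplane_proj i y')"
  shows "negligible A"
proof -
  let ?\<pi> = "hyperplane_proj i"
  have "?\<pi> ` A \<subseteq> {x. axis i 1 \<bullet> x = 0}"
    by (auto simp: hyperplane_proj_def inner_axis' inner_diff_right)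
  moreover have "axis i (1::real) \<noteq> 0"
    by (simp add: axis_eq_0_iff)
  ultimately have neg_proj: "negligible (?\<pi> ` A)"
    using negligible_subset[OF negligible_hyperplane] by blast
  have inj: "inj_on ?\<pi> A"
  proof (rule inj_onI)
    fix y y' assume y: "y \<in> A" "y' \<in> A" "?\<pi> y = ?\<pi> y'"
    then have "y $ i = y' $ i" using lip[OF y(1,2)] by simp
    then show "y = y'" using hyperplane_proj_decomp[of y i] hyperplane_proj_decomp[of y' i] y(3)
      by metis
  qed
  define f where "f = inv_into A ?\<pi>"
  have "negligible (f ` ?\<pi> ` A)"
  proof (rule negligible_locally_Lipschitz_image[OF order_refl neg_proj])
    fix x assume "x \<in> ?\<pi> ` A"
    then obtain y where y: "y \<in> A" "x = ?\<pi> y" by auto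
    show "\<exists>T B. open T \<and> x \<in> T \<and> (\<forall>z\<in>?\<pi> ` A \<inter> T. norm (f z - f x) \<le> B * norm (z - x))"
    proof (intro exI[of _ UNIV] exI[of _ "1 + c"] conjI ballI)
      fix z assume "z \<in> ?\<pi> ` A \<inter> UNIV"
      then obtain y' where y': "y' \<in> A" "z = ?\<pi> y'" by auto
      have "norm (y' - y) \<le> norm (?\<pi> y' - ?\<pi> y) + \<bar>y' $ i - y $ i\<bar>"
        using norm_triangle_ineq[of "?\<pi> y' - ?\<pi> y" "(y' $ i - y $ i) *\<^sub>R axis i 1"]
        by (simp add: diff_hyperplane_proj_decomp[of y' y i] norm_axis_1)
      also have "\<dots> \<le> (1 + c) * norm (?\<pi> y' - ?\<pi> y)"
        using lip[OF y'(1) y(1)] by (simp add: algebra_simps)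
      finally show "norm (f z - f x) \<le> (1 + c) * norm (z - x)"
        using y y' inj by (simp add: f_def)
    qed auto
  qed
  then show ?thesis using inj by (simp add: f_def image_comp)
qed

definition monotone_multimap :: "('a::real_inner \<Rightarrow> 'a set) \<Rightarrow> bool" where
  "monotone_multimap M \<longleftrightarrow> (\<forall>y y' u u'. u \<in> M y \<longrightarrow> u' \<in> M y' \<longrightarrow> 0 \<le> (u - u') \<bullet> (y - y'))"

lemma negligible_monotone_multimap_gap:
  fixes M :: "real^'n::finite \<Rightarrow> (real^'n) set"
  assumes mono: "monotone_multimap M" and h: "h > 0"
  shows "negligible {y. \<exists>u\<in>M y. \<exists>v\<in>M y. u $ i < a \<and> a + h < v $ i \<and> norm u \<le> r \<and> norm v \<le> r}"
    (is "negligible ?G")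
proof -
  let ?\<pi> = "hyperplane_proj i"
  have one_sided: "h * (y $ i - y' $ i) \<le> 2 * r * norm (?\<pi> y - ?\<pi> y')"
    if "y \<in> ?G" "y' \<in> ?G" for y y'
  proof -
    obtain u where u: "u \<in> M y" "u $ i < a" "norm u \<le> r" using \<open>y \<in> ?G\<close> by blast
    obtain v where v: "v \<in> M y'" "a + h < v $ i" "norm v \<le> r" using \<open>y' \<in> ?G\<close> by blast
    show ?thesis
    proof (cases "y' $ i \<le> y $ i")
      case True
      txt \<open>Monotonicity for the value of y below the gap against that of y' above it:
        the term from coordinate i is at most -h times its increment, so the other
        coordinates must compensate.\<close>
      have "0 \<le> (u - v) \<bullet> (y - y')"
        using mono u(1) v(1) unfolding monotone_multimap_def by blast
      also have "\<dots> = (u - v) \<bullet> (?\<pi> y - ?\<pi> y') + (u $ i - v $ i) * (y $ i - y' $ i)"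
        by (subst diff_hyperplane_proj_decomp[of y y' i]) (simp add: inner_add_right inner_axis)
      finally have "(v $ i - u $ i) * (y $ i - y' $ i) \<le> (u - v) \<bullet> (?\<pi> y - ?\<pi> y')"
        by (simp add: algebra_simps)
      also have "\<dots> \<le> norm (u - v) * norm (?\<pi> y - ?\<pi> y')"
        by (rule order_trans[OF abs_ge_self Cauchy_Schwarz_ineq2])
      also have "\<dots> \<le> 2 * r * norm (?\<pi> y - ?\<pi> y')"
        using norm_triangle_ineq4[of u v] u(3) v(3) by (intro mult_right_mono) auto
      finally show ?thesis
        using True u(2) v(2) mult_right_mono[of h "v $ i - u $ i" "y $ i - y' $ i"] by simp
    next
      case False
      have "0 \<le> r" using u(3) norm_ge_zero order_trans by blast
      then have "0 \<le> 2 * r * norm (?\<pi> y - ?\<pi> y')" by simp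
      moreover have "h * (y $ i - y' $ i) \<le> 0"
        using False h by (simp add: mult_nonneg_nonpos)
      ultimately show ?thesis by linarith
    qed
  qed
  show ?thesis
  proof (rule negligible_coordinate_Lipschitz_graph[where i = i and c = "2 * r / h"])
    fix y y' assume "y \<in> ?G" "y' \<in> ?G"
    then have "h * \<bar>y $ i - y' $ i\<bar> \<le> 2 * r * norm (?\<pi> y - ?\<pi> y')"
      using one_sided[of y y'] one_sided[of y' y] h
      by (simp add: abs_if norm_minus_commute right_diff_distrib)
    then show "\<bar>y $ i - y' $ i\<bar> \<le> 2 * r / h * norm (?\<pi> y - ?\<pi> y')"
      using h by (simp add: field_simps)
  qed
qed

lemma negligible_monotone_multimap_nonunique:
  fixes M :: "real^'n::finite \<Rightarrow> (real^'n) set"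
  assumes mono: "monotone_multimap M"
  shows "negligible {y. \<exists>u\<in>M y. \<exists>v\<in>M y. u \<noteq> v}"
proof -
  define G :: "'n \<times> int \<times> nat \<Rightarrow> (real^'n) set"
    where "G = (\<lambda>(i, m, k). {y. \<exists>u\<in>M y. \<exists>v\<in>M y. u $ i < m / (real k + 1) \<and>
      m / (real k + 1) + 1 / (real k + 1) < v $ i \<and> norm u \<le> k \<and> norm v \<le> k})"
  have "{y. \<exists>u\<in>M y. \<exists>v\<in>M y. u \<noteq> v} \<subseteq> \<Union>(range G)"
  proof
    fix y assume "y \<in> {y. \<exists>u\<in>M y. \<exists>v\<in>M y. u \<noteq> v}"
    then obtain u v i where uv: "u \<in> M y" "v \<in> M y" "u $ i < v $ i"
      by (auto simp: vec_eq_iff) (metis linorder_neqE_linordered_idom)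
    obtain k :: nat where k: "max (norm u) (max (norm v) (2 / (v $ i - u $ i))) < real k"
      using reals_Archimedean2 by blast
    have "2 < real k * (v $ i - u $ i)"
      using k uv(3) by (simp add: divide_less_eq mult.commute)
    then have gap: "2 < (real k + 1) * (v $ i - u $ i)"
      using uv(3) by (simp add: algebra_simps)
    define m where "m = \<lfloor>(real k + 1) * u $ i\<rfloor> + 1"
    have "(real k + 1) * u $ i < m"
      unfolding m_def by linarith
    then have "u $ i < m / (real k + 1)"
      by (simp add: less_divide_eq mult.commute)
    moreover have "m + 1 < (real k + 1) * v $ i"
      using gap unfolding m_def right_diff_distrib by linarith
    then have "m / (real k + 1) + 1 / (real k + 1) < v $ i"
      by (simp add: add_divide_distrib[symmetric] divide_less_eq mult.commute)
    ultimately have "y \<in> G (i, m, k)"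
      using uv k unfolding G_def by force
    then show "y \<in> \<Union>(range G)" by blast
  qed
  moreover have "negligible (\<Union>(range G))"
  proof (rule negligible_countable_Union)
    fix S assume "S \<in> range G"
    then obtain i m k where "S = G (i, m, k)" by (metis prod_cases3 rangeE)
    then show "negligible S"
      using negligible_monotone_multimap_gap[OF mono, where h = "1 / (real k + 1)" and i = i
          and a = "m / (real k + 1)" and r = k]
      by (simp add: G_def)
  qed simp
  ultimately show ?thesis using negligible_subset by blast
qed

definition fitted_minimisers :: "real^'d^'n \<Rightarrow> (real^'d \<Rightarrow> real) \<Rightarrow> (real^'d) set \<Rightarrow> real^'n \<Rightarrow> (real^'n) set" where
  "fitted_minimisers X p B y = (*v) X ` argmin_set (Qobj X p y) B"

lemma monotone_fitted_minimisers: "monotone_multimap (fitted_minimisers X p B)"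
  unfolding monotone_multimap_def
proof (intro allI impI)
  fix y y' u u' assume "u \<in> fitted_minimisers X p B y" "u' \<in> fitted_minimisers X p B y'"
  then obtain b b' where b: "u = X *v b" "b \<in> argmin_set (Qobj X p y) B"
    and b': "u' = X *v b'" "b' \<in> argmin_set (Qobj X p y') B"
    by (auto simp: fitted_minimisers_def)
  have "(1/2) * (norm (y - u))\<^sup>2 + p b \<le> (1/2) * (norm (y - u'))\<^sup>2 + p b'"
    and "(1/2) * (norm (y' - u'))\<^sup>2 + p b' \<le> (1/2) * (norm (y' - u))\<^sup>2 + p b"
    using b b' by (auto simp: argmin_set_def Qobj_def)
  then show "0 \<le> (u - u') \<bullet> (y - y')"
    by (simp add: power2_norm_eq_inner inner_diff_left inner_diff_right inner_commute
        algebra_simps)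
qed

lemma AE_not_in_negligible_absolutely_continuous:
  fixes Y :: "'w \<Rightarrow> 'a::euclidean_space"
  assumes "negligible N" "Y \<in> borel_measurable P"
    and "absolutely_continuous lborel (distr P borel Y)"
  shows "AE \<omega> in P. Y \<omega> \<notin> N"
proof -
  have "AE x in lborel. x \<notin> N"
    using AE_not_in[of N lebesgue] assms(1) by (simp add: negligible_iff_null_sets AE_completion_iff)
  then obtain N' where N': "N \<subseteq> N'" "N' \<in> null_sets lborel"
    by (auto elim!: AE_E simp: null_sets_def)
  then have "N' \<in> null_sets (distr P borel Y)"
    using assms(3) unfolding absolutely_continuous_def by blast
  then have "Y -` N' \<inter> space P \<in> null_sets P"
    using assms(2) by (auto simp: emeasure_distr null_sets_def intro: measurable_sets)
  then show ?thesis
    by (rule AE_I') (use N'(1) in auto)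
qed

theorem theorem2:
  fixes X :: "real^'d^'n"
    and Bs :: "nat \<Rightarrow> (real^'d) set" and J :: nat
    and p :: "real^'d \<Rightarrow> real"
    and P :: "'w measure" and Y :: "'w \<Rightarrow> real^'n"
  assumes "disjoint_family_on Bs {..<J}"
    and "\<And>j. j < J \<Longrightarrow> manifold_with_corners (Bs j)"
    and "\<And>j. j < J \<Longrightarrow> continuous_on (Bs j) p"
    and "rank X = CARD('d)"
    and "prob_space P"
    and "Y \<in> borel_measurable P"
    and "absolutely_continuous lborel (distr P borel Y)"
  shows "AE \<omega> in P. \<forall>\<beta>1\<in>argmin_set (Qobj X p (Y \<omega>)) (\<Union>j<J. Bs j).
                     \<forall>\<beta>2\<in>argmin_set (Qobj X p (Y \<omega>)) (\<Union>j<J. Bs j). \<beta>1 = \<beta>2"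
proof -
  let ?M = "fitted_minimisers X p (\<Union>j<J. Bs j)"
  have inj: "inj ((*v) X)" using assms(4) full_rank_injective by blast
  have "AE \<omega> in P. Y \<omega> \<notin> {y. \<exists>u\<in>?M y. \<exists>v\<in>?M y. u \<noteq> v}"
    using negligible_monotone_multimap_nonunique[OF monotone_fitted_minimisers] assms(6,7)
    by (rule AE_not_in_negligible_absolutely_continuous)
  then show ?thesis
    by eventually_elim (auto simp: fitted_minimisers_def dest: injD[OF inj])
qed

end
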